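(* Let $P\subset\mathbb{R}^{n+1}$ be an $n$-dimensional lattice polytope contained in the affine hyperplane $\{x_{n+1}=1\}$, of degree $d$, let $x$ be a lattice point in the relative interior of $(n-d+1)P$, and let $S\subset P$ be an $n$-dimensional lattice simplex with vertices $v_0,\dots,v_n$ such that $x$ lies in the cone spanned by $S$. Let $\sigma$ be the cone spanned by $P$. Then for every point $y\in\sigma$, $|V^-(y)|\le|Z^+(y)|$.
   Context: Lattice points are points of $\mathbb{Z}^{n+1}$. The degree $d$ of $P$ is the degree of the $h^*$-polynomial $h^*_P(t)$ defined by $\sum_{m\ge0}|mP\cap\mathbb{Z}^{n+1}|t^m=h^*_P(t)/(1-t)^{n+1}$; equivalently, $d$ is the largest nonnegative integer such that $(n-d)P$ has no lattice points in its relative interior. Every $y\in\mathbb{R}^{n+1}$ is written uniquely as $y=b_0(y)v_0+\dots+b_n(y)v_n$. $Z$ is the set of vertices $v_i$ of $S$ with $b_i(x)=0$; $V$ is the set of vertices $v_j$ of $S$ with $b_j(x)$ a positive integer. For $y\in\mathbb{R}^{n+1}$: $Z^+(y)$ (resp. $Z^-(y)$) is the set of $v_i\in Z$ with $b_i(y)>0$ (resp. $<0$), and $V^+(y)$ (resp. $V^-(y)$) is the set of $v_j\in V$ with $b_j(y)>0$ (resp. $<0$). *)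

theory Defs
  imports "HOL-Analysis.Analysis"
begin

definition lattice_point :: "real ^ 'n \<Rightarrow> bool" where
  "lattice_point z \<longleftrightarrow> (\<forall>i. z $ i \<in> \<int>)"

definition lattice_polytope :: "(real ^ 'n) set \<Rightarrow> bool" where
  "lattice_polytope P \<longleftrightarrow>
     (\<exists>A. finite A \<and> A \<noteq> {} \<and> (\<forall>a\<in>A. lattice_point a) \<and> P = convex hull A)"

definition dilate :: "nat \<Rightarrow> (real ^ 'n) set \<Rightarrow> (real ^ 'n) set" where
  "dilate k P = (\<lambda>z. real k *\<^sub>R z) ` P"

text \<open>Degree of an n-dimensional lattice polytope P, via the lattice-point
  characterisation of the degree of the h*-polynomial: kP has no lattice point
  in its relative interior for all 1 \<le> k \<le> n - d, and d is minimal with this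
  property (equivalently, n + 1 - d is the codegree, the least k \<ge> 1 such that
  kP has a relative-interior lattice point).\<close>
definition lattice_degree :: "nat \<Rightarrow> (real ^ 'n) set \<Rightarrow> nat" where
  "lattice_degree n P =
     (LEAST d. \<forall>k. 1 \<le> k \<and> k \<le> n - d \<longrightarrow>
                  (\<forall>z \<in> rel_interior (dilate k P). \<not> lattice_point z))"

definition bary :: "(nat \<Rightarrow> real ^ 'n) \<Rightarrow> nat \<Rightarrow> real ^ 'n \<Rightarrow> nat \<Rightarrow> real" where
  "bary v n y = (THE c. (\<Sum>i\<le>n. c i *\<^sub>R v i) = y \<and> (\<forall>i>n. c i = 0))"

end

theory Submission
  imports Defs
begin

text \<open>Write \<open>W = V\<^sup>-(y)\<close>, \<open>Z = Z\<^sup>+(y)\<close> and \<open>z = x + \<Sum>\<^sub>Z v\<^sub>i - \<Sum>\<^sub>W v\<^sub>j\<close>, a lattice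
  point at height \<open>(n - d + 1) + |Z| - |W|\<close>. In the coordinates of \<open>S\<close>, the point
  \<open>z - t y - t\<^sup>2 x\<close> has nonnegative coefficients for small \<open>t > 0\<close>, so \<open>z = q + t\<^sup>2 x\<close> with
  \<open>q\<close> in the cone over \<open>P\<close>. As \<open>x\<close> is interior to \<open>(n - d + 1)P\<close>, \<open>z\<close> is then interior to
  the dilate of \<open>P\<close> at its own height. If \<open>|W| > |Z|\<close>, that height lies between \<open>1\<close> and
  \<open>n - d\<close>, which the degree forbids.\<close>

lemma eventually_nonneg_quadratic_at_right_0:
  fixes a b c :: real
  assumes "0 \<le> c" and "c = 0 \<Longrightarrow> b < 0 \<or> (b = 0 \<and> a \<le> 0)"
  shows "\<forall>\<^sub>F t in at_right 0. 0 \<le> c - b * t - a * t\<^sup>2"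
proof -
  consider "0 < c" | "c = 0" "b < 0" | "c = 0" "b = 0" "a \<le> 0"
    using assms by linarith
  then show ?thesis
  proof cases
    case 1
    have "((\<lambda>t. c - b * t - a * t\<^sup>2) \<longlongrightarrow> c - b * 0 - a * 0\<^sup>2) (at_right 0)"
      by (intro tendsto_intros)
    then have "\<forall>\<^sub>F t in at_right 0. 0 < c - b * t - a * t\<^sup>2"
      using 1 by (intro order_tendstoD) auto
    then show ?thesis by eventually_elim simp
  next
    case 2
    have "((\<lambda>t. - b - a * t) \<longlongrightarrow> - b - a * 0) (at_right 0)"
      by (intro tendsto_intros)
    then have "\<forall>\<^sub>F t in at_right 0. 0 < - b - a * t"
      using 2 by (intro order_tendstoD) auto
    with eventually_at_right_less[of 0] show ?thesis
    proof eventually_elim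
      case (elim t)
      then have "0 \<le> t * (- b - a * t)" by simp
      then show ?case using 2 by (simp add: algebra_simps power2_eq_square)
    qed
  next
    case 3
    then show ?thesis by (simp add: mult_nonpos_nonneg)
  qed
qed

lemma sum_of_bool_scaleR:
  fixes f :: "'a \<Rightarrow> 'b::real_vector"
  assumes "finite A" and "B \<subseteq> A"
  shows "(\<Sum>k\<in>A. of_bool (k \<in> B) *\<^sub>R f k) = sum f B"
proof -
  have "(\<Sum>k\<in>A. of_bool (k \<in> B) *\<^sub>R f k) = (\<Sum>k\<in>A. if k \<in> B then f k else 0)"
    by (intro sum.cong) auto
  also have "\<dots> = sum f B"
    using sum.inter_restrict[OF assms(1), of f B] assms(2) by (simp add: Int_absorb1)
  finally show ?thesis .
qed

lemma convex_cone_cone_hull: "convex S \<Longrightarrow> S \<noteq> {} \<Longrightarrow> convex_cone (cone hull S)"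
  using cone_cone_hull[of S]
  by (simp add: convex_cone_def convex_cone_hull conic_def cone_def cone_hull_empty_iff[symmetric])

lemma convex_cone_sum:
  assumes "convex_cone S" "finite I" "\<And>i. i \<in> I \<Longrightarrow> f i \<in> S"
  shows "sum f I \<in> S"
  using assms(2,3) by induction (auto intro: convex_cone_add convex_cone_contains_0 assms(1))

lemma lattice_polytope_convex: "lattice_polytope P \<Longrightarrow> convex P"
  unfolding lattice_polytope_def by auto

lemma lattice_polytope_nonempty: "lattice_polytope P \<Longrightarrow> P \<noteq> {}"
  unfolding lattice_polytope_def by auto

lemma lattice_point_add: "lattice_point a \<Longrightarrow> lattice_point b \<Longrightarrow> lattice_point (a + b)"
  unfolding lattice_point_def by simp

lemma lattice_point_diff: "lattice_point a \<Longrightarrow> lattice_point b \<Longrightarrow> lattice_point (a - b)"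
  unfolding lattice_point_def by simp

lemma lattice_point_sum: "(\<And>i. i \<in> I \<Longrightarrow> lattice_point (f i)) \<Longrightarrow> lattice_point (sum f I)"
  unfolding lattice_point_def by (simp add: sum_component Ints_sum)

lemma dilate_subset_cone_hull: "dilate h P \<subseteq> cone hull P"
  unfolding dilate_def by (auto intro: mem_cone_hull)

lemma cone_hull_height_nonneg:
  fixes P :: "(real ^ 'n) set"
  assumes "P \<subseteq> {z. z $ k = 1}" and "z \<in> cone hull P"
  shows "0 \<le> z $ k"
  using assms unfolding cone_hull_expl by (auto simp: subset_iff)

lemma cone_hull_height_slice:
  fixes P :: "(real ^ 'n) set"
  assumes "P \<subseteq> {z. z $ k = 1}" and "z \<in> cone hull P" and "z $ k = real h"
  shows "z \<in> dilate h P"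
proof -
  obtain c p where cp: "z = c *\<^sub>R p" "p \<in> P"
    using assms(2) unfolding cone_hull_expl by blast
  have "c = real h"
    using assms(1,3) cp by auto
  then show ?thesis
    using cp unfolding dilate_def by blast
qed

lemma dilate_height:
  fixes P :: "(real ^ 'n) set"
  assumes "P \<subseteq> {z. z $ k = 1}" and "x \<in> dilate h P"
  shows "x $ k = real h"
  using assms unfolding dilate_def by auto

lemma affine_hull_eq_height_one:
  fixes P :: "(real ^ 'n) set"
  assumes "P \<noteq> {}" and "P \<subseteq> {z. z $ k = 1}" and "aff_dim P = int CARD('n) - 1"
  shows "affine hull P = {z. z $ k = 1}"
proof (rule affine_dim_equal)
  show "affine {z :: real ^ 'n. z $ k = 1}"
    using affine_hyperplane[of "axis k (1::real)" 1] by (simp add: inner_axis')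
  then show "affine hull P \<subseteq> {z :: real ^ 'n. z $ k = 1}"
    using assms(2) by (simp add: hull_minimal)
  have "aff_dim {z :: real ^ 'n. z $ k = 1} = int (DIM(real ^ 'n) - 1)"
    using aff_dim_hyperplane[of "axis k (1::real)" 1] by (simp add: inner_axis')
  then show "aff_dim (affine hull P) = aff_dim {z :: real ^ 'n. z $ k = 1}"
    using assms(3) by simp
qed (use assms(1) in auto)

lemma affine_hull_dilate:
  fixes P :: "(real ^ 'n) set"
  assumes "affine hull P = {z. z $ k = 1}" and "0 < h"
  shows "affine hull (dilate h P) = {z. z $ k = real h}"
proof -
  have "affine hull (dilate h P) = (\<lambda>z. real h *\<^sub>R z) ` {z. z $ k = 1}"
    unfolding dilate_def assms(1)[symmetric]
    by (simp add: affine_hull_linear_image bounded_linear_scaleR_right)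
  also have "\<dots> = {z. z $ k = real h}"
  proof (intro set_eqI iffI)
    fix u assume "u \<in> {z. z $ k = real h}"
    then have "u = real h *\<^sub>R ((1 / real h) *\<^sub>R u)" "(1 / real h) *\<^sub>R u \<in> {z. z $ k = 1}"
      using assms(2) by auto
    then show "u \<in> (\<lambda>z. real h *\<^sub>R z) ` {z. z $ k = 1}" by blast
  qed auto
  finally show ?thesis .
qed

text \<open>A ball of radius \<open>e\<close> around \<open>x\<close> in its slice of the cone is carried to a ball of
  radius \<open>s * e\<close> around \<open>q + s x\<close> in its slice.\<close>

lemma rel_interior_dilate_add_cone_hull:
  fixes P :: "(real ^ 'n) set"
  assumes conv: "convex P" and height: "P \<subseteq> {z. z $ k = 1}"
    and aff: "affine hull P = {z. z $ k = 1}"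
    and m: "0 < m" and x: "x \<in> rel_interior (dilate m P)"
    and q: "q \<in> cone hull P" and s: "0 < s" and h: "(q + s *\<^sub>R x) $ k = real h"
  shows "q + s *\<^sub>R x \<in> rel_interior (dilate h P)"
proof -
  define z where "z = q + s *\<^sub>R x"
  have "P \<noteq> {}"
    using x rel_interior_subset unfolding dilate_def by blast
  then have cone: "convex_cone (cone hull P)"
    by (intro convex_cone_cone_hull conv)
  have x_height: "x $ k = real m"
    using x rel_interior_subset dilate_height[OF height] by blast
  have "0 < z $ k"
    using cone_hull_height_nonneg[OF height q] x_height m s by (simp add: z_def add_nonneg_pos)
  then have h_pos: "0 < h"
    using h by (simp add: z_def)
  obtain e where e: "0 < e" "ball x e \<inter> affine hull (dilate m P) \<subseteq> dilate m P"
    using x unfolding mem_rel_interior_ball by blast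
  have near: "u \<in> dilate h P" if u: "dist z u < s * e" "u $ k = real h" for u
  proof -
    define x' where "x' = x + (1 / s) *\<^sub>R (u - z)"
    have "dist x x' = dist z u / s"
      using s by (simp add: x'_def dist_norm norm_minus_commute)
    then have "x' \<in> ball x e"
      using u(1) s by (simp add: divide_less_eq mult.commute)
    moreover have "x' \<in> affine hull (dilate m P)"
      using u(2) h x_height s by (simp add: affine_hull_dilate[OF aff m] x'_def z_def)
    ultimately have "x' \<in> cone hull P"
      using e(2) dilate_subset_cone_hull by blast
    moreover have "u = q + s *\<^sub>R x'"
      using s by (simp add: x'_def z_def scaleR_add_right)
    ultimately have "u \<in> cone hull P"
      using q s cone by (simp add: convex_cone_add convex_cone_scaleR)
    then show ?thesis
      using u(2) by (rule cone_hull_height_slice[OF height])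
  qed
  have "z \<in> rel_interior (dilate h P)"
    unfolding mem_rel_interior_ball
  proof (intro conjI exI[of _ "s * e"])
    show "z \<in> dilate h P"
      using near[of z] h s e(1) by (simp add: z_def)
    show "0 < s * e"
      using s e(1) by simp
    show "ball z (s * e) \<inter> affine hull dilate h P \<subseteq> dilate h P"
      using near by (auto simp: affine_hull_dilate[OF aff h_pos])
  qed
  then show ?thesis
    by (simp add: z_def)
qed

lemma no_lattice_point_rel_interior_dilate_below_codegree:
  assumes "1 \<le> h" and "h \<le> n - lattice_degree n P" and "z \<in> rel_interior (dilate h P)"
  shows "\<not> lattice_point z"
proof -
  define Q where "Q d \<longleftrightarrow> (\<forall>k. 1 \<le> k \<and> k \<le> n - d \<longrightarrow>
      (\<forall>z \<in> rel_interior (dilate k P). \<not> lattice_point z))" for d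
  have "Q n"
    by (simp add: Q_def)
  then have "Q (Least Q)"
    by (rule LeastI)
  then show ?thesis
    using assms unfolding Q_def lattice_degree_def by blast
qed

lemma lattice_point_cone_hull_add_rel_interior_height:
  fixes P :: "(real ^ 'n) set"
  assumes conv: "convex P" and height: "P \<subseteq> {z. z $ k = 1}"
    and aff: "affine hull P = {z. z $ k = 1}"
    and m: "0 < m" and x: "x \<in> rel_interior (dilate m P)"
    and q: "q \<in> cone hull P" and s: "0 < s" and lat: "lattice_point (q + s *\<^sub>R x)"
  shows "real (n - lattice_degree n P) < (q + s *\<^sub>R x) $ k"
proof -
  obtain h :: int where h: "(q + s *\<^sub>R x) $ k = of_int h"
    using lat unfolding lattice_point_def by (meson Ints_cases)
  have "x $ k = real m"
    using x rel_interior_subset dilate_height[OF height] by blast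
  then have "0 < (q + s *\<^sub>R x) $ k"
    using cone_hull_height_nonneg[OF height q] m s by (simp add: add_nonneg_pos)
  then have h_nat: "(q + s *\<^sub>R x) $ k = real (nat h)" and "1 \<le> nat h"
    using h by auto
  moreover have "q + s *\<^sub>R x \<in> rel_interior (dilate (nat h) P)"
    using h_nat by (rule rel_interior_dilate_add_cone_hull[OF conv height aff m x q s])
  ultimately have "\<not> nat h \<le> n - lattice_degree n P"
    using lat no_lattice_point_rel_interior_dilate_below_codegree by blast
  then show ?thesis
    using h_nat by simp
qed

lemma affine_independent_height_one_imp_independent:
  fixes S :: "(real ^ 'n) set"
  assumes "\<not> affine_dependent S" and "\<And>z. z \<in> S \<Longrightarrow> z $ k = 1"
  shows "independent S"
proof
  have fin: "finite S"
    using assms(1) by (rule aff_independent_finite)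
  assume "dependent S"
  then obtain u where u: "\<exists>z\<in>S. u z \<noteq> 0" "(\<Sum>z\<in>S. u z *\<^sub>R z) = 0"
    using dependent_finite[OF fin] by auto
  have "sum u S = (\<Sum>z\<in>S. u z *\<^sub>R z) $ k"
    using assms(2) by (simp add: sum_component)
  with u have "affine_dependent S"
    unfolding affine_dependent_explicit_finite[OF fin] by auto
  with assms(1) show False ..
qed

locale indexed_basis =
  fixes v :: "nat \<Rightarrow> real ^ 'n" and n :: nat
  assumes inj: "inj_on v {..n}"
    and independent: "independent (v ` {..n})"
    and spanning: "span (v ` {..n}) = UNIV"
begin

lemma sum_reindex: "(\<Sum>w\<in>v ` {..n}. f w) = (\<Sum>i\<le>n. f (v i))"
  using sum.reindex[OF inj] by simp

lemma coeffs_eq_0: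
  assumes "(\<Sum>i\<le>n. c i *\<^sub>R v i) = 0" and "i \<le> n"
  shows "c i = 0"
proof -
  define u where "u w = c (inv_into {..n} v w)" for w
  have u_v: "u (v j) = c j" if "j \<le> n" for j
    using inj that by (simp add: u_def)
  have "(\<Sum>w\<in>v ` {..n}. u w *\<^sub>R w) = 0"
    using assms(1) by (simp add: sum_reindex u_v)
  then have "u (v i) = 0"
    using independent assms(2) unfolding independent_explicit by blast
  then show ?thesis
    using u_v assms(2) by simp
qed

lemma coeffs_unique:
  assumes "(\<Sum>i\<le>n. c i *\<^sub>R v i) = (\<Sum>i\<le>n. c' i *\<^sub>R v i)" and "i \<le> n"
  shows "c i = c' i"
  using coeffs_eq_0[of "\<lambda>i. c i - c' i"] assms
  by (simp add: scaleR_diff_left sum_subtractf)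

lemma ex1_coeffs: "\<exists>!c. (\<Sum>i\<le>n. c i *\<^sub>R v i) = y \<and> (\<forall>i>n. c i = 0)"
proof -
  have "y \<in> range (\<lambda>u. \<Sum>w\<in>v ` {..n}. u w *\<^sub>R w)"
    using spanning span_finite[of "v ` {..n}"] by simp
  then obtain u where u: "(\<Sum>w\<in>v ` {..n}. u w *\<^sub>R w) = y"
    by auto
  define c where "c i = (if i \<le> n then u (v i) else 0)" for i
  have "(\<Sum>i\<le>n. c i *\<^sub>R v i) = y \<and> (\<forall>i>n. c i = 0)"
    using u by (simp add: c_def sum_reindex)
  moreover have "c' = c''"
    if "(\<Sum>i\<le>n. c' i *\<^sub>R v i) = y \<and> (\<forall>i>n. c' i = 0)"
      "(\<Sum>i\<le>n. c'' i *\<^sub>R v i) = y \<and> (\<forall>i>n. c'' i = 0)" for c' c''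
  proof
    fix i
    show "c' i = c'' i"
      using that coeffs_unique[of c' c'' i] by (cases "i \<le> n") auto
  qed
  ultimately show ?thesis by blast
qed

lemma bary_sum: "(\<Sum>i\<le>n. bary v n y i *\<^sub>R v i) = y"
  unfolding bary_def using theI'[OF ex1_coeffs] by blast

lemma bary_eqI:
  assumes "(\<Sum>i\<le>n. c i *\<^sub>R v i) = y" and "i \<le> n"
  shows "bary v n y i = c i"
  using coeffs_unique[of "bary v n y" c i] assms by (simp add: bary_sum)

lemma bary_nonneg_cone_hull_simplex:
  assumes "y \<in> cone hull (convex hull (v ` {..n}))" and "i \<le> n"
  shows "0 \<le> bary v n y i"
proof -
  obtain a s where as: "y = a *\<^sub>R s" "0 \<le> a" "s \<in> convex hull (v ` {..n})"
    using assms(1) unfolding cone_hull_expl by blast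
  obtain u where u: "\<forall>w\<in>v ` {..n}. 0 \<le> u w" "(\<Sum>w\<in>v ` {..n}. u w *\<^sub>R w) = s"
    using as(3) convex_hull_finite[of "v ` {..n}"] by auto
  have "(\<Sum>j\<le>n. (a * u (v j)) *\<^sub>R v j) = a *\<^sub>R (\<Sum>j\<le>n. u (v j) *\<^sub>R v j)"
    by (simp add: scaleR_sum_right)
  also have "\<dots> = y"
    using as(1) u(2) by (simp add: sum_reindex)
  finally have "(\<Sum>j\<le>n. (a * u (v j)) *\<^sub>R v j) = y" .
  then have "bary v n y i = a * u (v i)"
    using assms(2) by (rule bary_eqI)
  then show ?thesis
    using as(2) u(1) assms(2) by simp
qed

text \<open>Only the term \<open>t y\<close> keeps the coefficients on \<open>W\<close> nonnegative: there \<open>bary v n x j\<close>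
  may equal \<open>1\<close>, and the loss \<open>t\<^sup>2 bary v n x j\<close> is paid for by \<open>- t bary v n y j > 0\<close>.\<close>

lemma shifted_point_minus_small_multiple_in_cone:
  assumes C: "convex_cone C" and v_C: "\<And>i. i \<le> n \<Longrightarrow> v i \<in> C" and y_C: "y \<in> C"
    and x_nonneg: "\<And>i. i \<le> n \<Longrightarrow> 0 \<le> bary v n x i"
    and W: "W = {j. j \<le> n \<and> bary v n x j \<in> \<int> \<and> 0 < bary v n x j \<and> bary v n y j < 0}"
    and Z: "Z = {i. i \<le> n \<and> bary v n x i = 0 \<and> 0 < bary v n y i}"
  shows "\<exists>t>0. x + sum v Z - sum v W - t\<^sup>2 *\<^sub>R x \<in> C"
proof -
  define a where "a = bary v n x"
  define b where "b = bary v n y"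
  define c where "c k = a k + of_bool (k \<in> Z) - of_bool (k \<in> W)" for k
  have "\<forall>\<^sub>F t in at_right 0. 0 \<le> c k - b k * t - a k * t\<^sup>2" if k: "k \<le> n" for k
  proof (rule eventually_nonneg_quadratic_at_right_0)
    have a_nonneg: "0 \<le> a k"
      using x_nonneg[OF k] by (simp add: a_def)
    have in_Z: "a k = 0 \<and> 0 < b k \<and> k \<notin> W" if "k \<in> Z"
      using that Z W by (simp add: a_def b_def)
    have in_W: "1 \<le> a k \<and> b k < 0" if "k \<in> W"
      using that W Ints_nonzero_abs_ge1[of "a k"] by (auto simp: a_def b_def)
    have outside: "b k \<le> 0" if "a k = 0" "k \<notin> Z"
      using that k Z by (auto simp: a_def b_def)
    show "0 \<le> c k" and "c k = 0 \<Longrightarrow> b k < 0 \<or> (b k = 0 \<and> a k \<le> 0)"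
      using a_nonneg in_Z in_W outside unfolding c_def
      by (cases "k \<in> Z"; cases "k \<in> W"; force)+
  qed
  then have "\<forall>\<^sub>F t in at_right 0. 0 < t \<and> (\<forall>k\<in>{..n}. 0 \<le> c k - b k * t - a k * t\<^sup>2)"
    by (intro eventually_conj eventually_at_right_less eventually_ball_finite) auto
  then have "\<exists>t. 0 < t \<and> (\<forall>k\<in>{..n}. 0 \<le> c k - b k * t - a k * t\<^sup>2)"
    by (rule eventually_happens'[OF trivial_limit_at_right_real])
  then obtain t where t: "0 < t" "\<And>k. k \<le> n \<Longrightarrow> 0 \<le> c k - b k * t - a k * t\<^sup>2"
    by auto
  have "(\<Sum>k\<le>n. (c k - b k * t - a k * t\<^sup>2) *\<^sub>R v k)
      = (\<Sum>k\<le>n. a k *\<^sub>R v k) + (\<Sum>k\<le>n. of_bool (k \<in> Z) *\<^sub>R v k)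
        - (\<Sum>k\<le>n. of_bool (k \<in> W) *\<^sub>R v k)
        - t *\<^sub>R (\<Sum>k\<le>n. b k *\<^sub>R v k) - t\<^sup>2 *\<^sub>R (\<Sum>k\<le>n. a k *\<^sub>R v k)"
    by (simp add: c_def algebra_simps sum.distrib sum_subtractf scaleR_sum_right)
  also have "\<dots> = x + sum v Z - sum v W - t *\<^sub>R y - t\<^sup>2 *\<^sub>R x"
    using sum_of_bool_scaleR[of "{..n}" Z v] sum_of_bool_scaleR[of "{..n}" W v] W Z
    by (simp add: a_def b_def bary_sum subset_eq del: of_bool_conj)
  finally have "(\<Sum>k\<le>n. (c k - b k * t - a k * t\<^sup>2) *\<^sub>R v k)
      = x + sum v Z - sum v W - t *\<^sub>R y - t\<^sup>2 *\<^sub>R x" .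
  moreover have "(\<Sum>k\<le>n. (c k - b k * t - a k * t\<^sup>2) *\<^sub>R v k) \<in> C"
    using t by (intro convex_cone_sum[OF C] convex_cone_scaleR[OF C] v_C) auto
  ultimately have "x + sum v Z - sum v W - t *\<^sub>R y - t\<^sup>2 *\<^sub>R x \<in> C"
    by simp
  then have "(x + sum v Z - sum v W - t *\<^sub>R y - t\<^sup>2 *\<^sub>R x) + t *\<^sub>R y \<in> C"
    using t(1) y_C by (intro convex_cone_add[OF C] convex_cone_scaleR[OF C]) auto
  then show ?thesis
    using t(1) by (intro exI[of _ t]) (simp add: algebra_simps)
qed

end

lemma simplex_vertices_indexed_basis:
  fixes v :: "nat \<Rightarrow> real ^ 'n"
  assumes "CARD('n) = n + 1"
    and "aff_dim (convex hull (v ` {..n})) = int n"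
    and "\<And>i. i \<le> n \<Longrightarrow> v i $ k = 1"
  shows "indexed_basis v n"
proof
  have fin: "finite (v ` {..n})" by simp
  have "int n \<le> int (card (v ` {..n})) - 1"
    using aff_dim_le_card[OF fin] assms(2) by (simp add: aff_dim_convex_hull)
  moreover have "card (v ` {..n}) \<le> n + 1"
    using card_image_le[of "{..n}" v] by simp
  ultimately have card: "card (v ` {..n}) = n + 1" by linarith
  then show "inj_on v {..n}"
    by (intro eq_card_imp_inj_on) auto
  have "\<not> affine_dependent (v ` {..n})"
    using assms(2) card by (simp add: affine_independent_iff_card aff_dim_convex_hull)
  then show indep: "independent (v ` {..n})"
    by (rule affine_independent_height_one_imp_independent) (use assms(3) in auto)
  show "span (v ` {..n}) = UNIV"
    using dim_eq_card_independent[OF indep] card assms(1) dim_eq_full[of "v ` {..n}"] by simp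
qed

theorem lemma2p4:
  fixes P :: "(real ^ 'm) set" and n d :: nat and last :: 'm
    and x :: "real ^ 'm" and v :: "nat \<Rightarrow> real ^ 'm" and y :: "real ^ 'm"
  assumes dim_space: "CARD('m) = n + 1"
    and P_poly: "lattice_polytope P"
    and P_dim: "aff_dim P = int n"
    and P_hyp: "P \<subseteq> {z. z $ last = 1}"
    and P_deg: "d = lattice_degree n P"
    and x_lat: "lattice_point x"
    and x_int: "x \<in> rel_interior (dilate (n - d + 1) P)"
    and v_lat: "\<forall>i\<le>n. lattice_point (v i)"
    and S_dim: "aff_dim (convex hull (v ` {..n})) = int n"
    and S_sub: "convex hull (v ` {..n}) \<subseteq> P"
    and x_cone: "x \<in> cone hull (convex hull (v ` {..n}))"
    and y_cone: "y \<in> cone hull P"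
  shows "card {j. j \<le> n \<and> bary v n x j \<in> \<int> \<and> bary v n x j > 0 \<and> bary v n y j < 0}
         \<le> card {i. i \<le> n \<and> bary v n x i = 0 \<and> bary v n y i > 0}"
proof -
  have v_P: "v i \<in> P" if "i \<le> n" for i
    using S_sub hull_inc[of "v i" "v ` {..n}"] that by blast
  have v_height: "v i $ last = 1" if "i \<le> n" for i
    using v_P[OF that] P_hyp by blast
  interpret indexed_basis v n
    using dim_space S_dim v_height by (rule simplex_vertices_indexed_basis)
  have conv: "convex P" and P_ne: "P \<noteq> {}"
    using P_poly by (simp_all add: lattice_polytope_convex lattice_polytope_nonempty)
  have aff: "affine hull P = {z. z $ last = 1}"
    using P_ne P_hyp P_dim dim_space by (intro affine_hull_eq_height_one) auto
  define W where "W = {j. j \<le> n \<and> bary v n x j \<in> \<int> \<and> 0 < bary v n x j \<and> bary v n y j < 0}"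
  define Z where "Z = {i. i \<le> n \<and> bary v n x i = 0 \<and> 0 < bary v n y i}"
  define z where "z = x + sum v Z - sum v W"
  have v_cone: "v i \<in> cone hull P" if "i \<le> n" for i
    using v_P[OF that] by (rule hull_inc)
  obtain t where t: "0 < t" "z - t\<^sup>2 *\<^sub>R x \<in> cone hull P"
    using shifted_point_minus_small_multiple_in_cone[OF convex_cone_cone_hull[OF conv P_ne] v_cone
        y_cone bary_nonneg_cone_hull_simplex[OF x_cone] W_def Z_def]
    unfolding z_def by blast
  have "lattice_point z"
    using x_lat v_lat unfolding z_def W_def Z_def
    by (intro lattice_point_diff lattice_point_add lattice_point_sum) auto
  then have "real (n - d) < z $ last"
    using lattice_point_cone_hull_add_rel_interior_height[OF conv P_hyp aff _ x_int t(2), of "t\<^sup>2"]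
      t(1) P_deg by simp
  moreover have "x $ last = real (n - d + 1)"
    using x_int rel_interior_subset dilate_height[OF P_hyp] by blast
  then have "z $ last = real (n - d + 1) + real (card Z) - real (card W)"
    using v_height unfolding z_def W_def Z_def by (simp add: sum_component)
  ultimately show ?thesis
    unfolding W_def[symmetric] Z_def[symmetric] by linarith
qed

end
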